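(* Let $\Gamma$ be a single-player extensive-form game. For each leaf $z\in\mathcal Z$, $$\frac{1}{\alpha(z)}\le\prod_{I\in\mathcal I_1:\,n_z(I)>1}\min(n_z(I),|A_I|)^{n_z(I)}.$$
   Context: A single-player extensive-form game consists of a finite rooted tree (leaves $\mathcal Z$), nonterminal nodes belonging to Player 1 or chance, and a partition $\mathcal I_1$ of Player 1's nodes into infosets with common action sets $A_I$. For $z\in\mathcal Z$ with root-to-$z$ path $(h_0,\dots,h_{d-1})$, let $I_k$ be the infoset of $h_k$ (for Player 1's nodes) and $a_k$ the action taken at $h_k$. For $I\in\mathcal I_1$ and $a\in A_I$: $n_z(I)=|\{k:I_k=I\}|$, $n_z(a)=|\{k:I_k=I,a_k=a\}|$, $p_z(a)=n_z(a)/n_z(I)$, and the absentmindedness coefficient is $\alpha(z)=\prod_{I\in\mathcal I_1:n_z(I)>1}\prod_{a\in A_I:n_z(a)>0}p_z(a)^{n_z(a)}$. *)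

theory Defs
  imports Complex_Main
begin

(* A game tree is a finite prefix-closed set T of action sequences (histories);
   the root is [] and the children of h are the histories h @ [a].
   P1 is the set of Player 1's nodes (all other nonterminal nodes are chance nodes),
   info h is the infoset of a Player-1 node h, A I is the action set of infoset I. *)

definition children :: "'a list set \<Rightarrow> 'a list \<Rightarrow> 'a set" where
  "children T h = {a. h @ [a] \<in> T}"

definition is_leaf :: "'a list set \<Rightarrow> 'a list \<Rightarrow> bool" where
  "is_leaf T z \<longleftrightarrow> z \<in> T \<and> children T z = {}"

definition sp_game :: "'a list set \<Rightarrow> 'a list set \<Rightarrow> ('a list \<Rightarrow> 'i) \<Rightarrow> ('i \<Rightarrow> 'a set) \<Rightarrow> bool" where
  "sp_game T P1 info A \<longleftrightarrow>
     finite T \<and> [] \<in> T \<and> (\<forall>h a. h @ [a] \<in> T \<longrightarrow> h \<in> T) \<and>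
     P1 \<subseteq> T \<and> (\<forall>h\<in>P1. \<not> is_leaf T h \<and> children T h = A (info h))"

(* n_z(I): number of Player-1 nodes on the root-to-z path lying in infoset I
   (the k-th node on the path is take k z, the action taken there is z ! k) *)
definition n_info :: "'a list set \<Rightarrow> ('a list \<Rightarrow> 'i) \<Rightarrow> 'a list \<Rightarrow> 'i \<Rightarrow> nat" where
  "n_info P1 info z I = card {k. k < length z \<and> take k z \<in> P1 \<and> info (take k z) = I}"

definition n_act :: "'a list set \<Rightarrow> ('a list \<Rightarrow> 'i) \<Rightarrow> 'a list \<Rightarrow> 'i \<Rightarrow> 'a \<Rightarrow> nat" where
  "n_act P1 info z I a = card {k. k < length z \<and> take k z \<in> P1 \<and> info (take k z) = I \<and> z ! k = a}"

definition alpha :: "'a list set \<Rightarrow> ('a list \<Rightarrow> 'i) \<Rightarrow> ('i \<Rightarrow> 'a set) \<Rightarrow> 'a list \<Rightarrow> real" where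
  "alpha P1 info A z =
     (\<Prod>I\<in>{I \<in> info ` P1. n_info P1 info z I > 1}.
        \<Prod>a\<in>{a \<in> A I. n_act P1 info z I a > 0}.
          (real (n_act P1 info z I a) / real (n_info P1 info z I)) ^ n_act P1 info z I a)"

end

theory Submission
  imports Defs "HOL-Analysis.Convex"
begin

text \<open>For an infoset I met n = n_z(I) times on the path to z, the factor of alpha(z) belonging
  to I is the likelihood exp (- n H(p)) of the empirical distribution p of the actions taken at I.
  By Jensen's inequality for ln, the entropy H(p) is at most the logarithm of the size of the
  support of p, and this support consists of at most n actions, all of them in A_I.\<close>

lemma one_div_empirical_likelihood_le:
  fixes c :: "'b \<Rightarrow> nat"
  assumes fin: "finite S" and pos: "\<And>a. a \<in> S \<Longrightarrow> c a > 0" and n: "n = (\<Sum>a\<in>S. c a)"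
  shows "1 / (\<Prod>a\<in>S. (real (c a) / real n) ^ c a) \<le> real (card S) ^ n"
proof (cases "S = {}")
  case True
  then show ?thesis using n by simp
next
  case False
  have n_pos: "real n > 0"
    using False fin pos n by (simp add: sum_pos)
  define w where "w a = real (c a) / real n" for a
  define P where "P = (\<Prod>a\<in>S. w a ^ c a)"
  have w_pos: "w a > 0" if "a \<in> S" for a
    using pos[OF that] n_pos by (simp add: w_def)
  have P_pos: "P > 0"
    unfolding P_def using w_pos by (simp add: prod_pos)
  have w_sum: "(\<Sum>a\<in>S. w a) = 1"
    using n_pos by (simp add: w_def n flip: sum_divide_distrib)
  have ln_P: "ln P = (\<Sum>a\<in>S. real (c a) * ln (w a))"
    unfolding P_def using fin w_pos
    by (subst ln_prod) (auto simp: ln_realpow less_imp_neq[symmetric] intro!: sum.cong)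
  have "(\<Sum>a\<in>S. w a * ln (inverse (w a))) \<le> ln (\<Sum>a\<in>S. w a *\<^sub>R inverse (w a))"
    using fin False ln_concave w_sum w_pos by (intro concave_on_sum) (auto simp: less_imp_le)
  also have "(\<Sum>a\<in>S. w a *\<^sub>R inverse (w a)) = real (card S)"
    using w_pos by (simp add: less_imp_neq[symmetric])
  also have "(\<Sum>a\<in>S. w a * ln (inverse (w a))) = - ln P / real n"
    unfolding ln_P ln_inverse by (simp add: w_def sum_divide_distrib flip: sum_negf)
  finally have "- ln P / real n \<le> ln (real (card S))" .
  then have "- ln P \<le> real n * ln (real (card S))"
    using n_pos by (simp add: field_simps)
  then have "ln (1 / P) \<le> ln (real (card S) ^ n)"
    using P_pos False fin by (simp add: ln_div ln_realpow card_gt_0_iff)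
  then show ?thesis
    using P_pos False fin by (simp add: P_def w_def card_gt_0_iff)
qed

lemma one_div_empirical_likelihood_le_min:
  fixes c :: "'b \<Rightarrow> nat"
  assumes fin: "finite A" and n: "n = (\<Sum>a\<in>A. c a)"
  shows "1 / (\<Prod>a\<in>{a \<in> A. c a > 0}. (real (c a) / real n) ^ c a) \<le> real (min n (card A)) ^ n"
proof -
  define S where "S = {a \<in> A. c a > 0}"
  have fin_S: "finite S"
    using fin by (simp add: S_def)
  have n_S: "n = (\<Sum>a\<in>S. c a)"
    unfolding n S_def using fin by (intro sum.mono_neutral_right) auto
  have "card S = (\<Sum>a\<in>S. 1)"
    by simp
  also have "\<dots> \<le> n"
    unfolding n_S S_def by (intro sum_mono) auto
  finally have "card S \<le> min n (card A)"
    using fin by (auto simp: S_def intro: card_mono)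
  then have "real (card S) ^ n \<le> real (min n (card A)) ^ n"
    by (intro power_mono) auto
  with one_div_empirical_likelihood_le[OF fin_S _ n_S] show ?thesis
    by (simp add: S_def)
qed

lemma sp_game_take_mem:
  assumes game: "sp_game T P1 info A" and z: "z \<in> T"
  shows "take k z \<in> T"
proof -
  have "xs @ ys \<in> T \<Longrightarrow> xs \<in> T" for xs ys
  proof (induction ys rule: rev_induct)
    case (snoc y ys)
    then show ?case
      using game unfolding sp_game_def by (metis append_assoc)
  qed simp
  then show ?thesis
    using z by (metis append_take_drop_id)
qed

lemma sp_game_finite_actions:
  assumes game: "sp_game T P1 info A" and h: "h \<in> P1"
  shows "finite (A (info h))"
proof -
  have "A (info h) = (\<lambda>a. h @ [a]) -` T"
    using game h unfolding sp_game_def children_def by (simp add: vimage_def)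
  then show ?thesis
    using game unfolding sp_game_def by (auto intro: finite_vimageI inj_onI)
qed

lemma sp_game_path_action_mem:
  assumes game: "sp_game T P1 info A" and z: "z \<in> T"
    and k: "k < length z" and node: "take k z \<in> P1"
  shows "z ! k \<in> A (info (take k z))"
proof -
  have "take k z @ [z ! k] \<in> T"
    using sp_game_take_mem[OF game z, of "Suc k"] k by (simp add: take_Suc_conv_app_nth)
  then show ?thesis
    using game node unfolding sp_game_def children_def by auto
qed

lemma sum_n_act_eq_n_info:
  assumes game: "sp_game T P1 info A" and z: "z \<in> T" and I: "I \<in> info ` P1"
  shows "(\<Sum>a\<in>A I. n_act P1 info z I a) = n_info P1 info z I"
proof -
  define K where "K = {k. k < length z \<and> take k z \<in> P1 \<and> info (take k z) = I}"
  have fin_A: "finite (A I)"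
    using I sp_game_finite_actions[OF game] by blast
  have "(\<lambda>k. z ! k) ` K \<subseteq> A I"
    using sp_game_path_action_mem[OF game z] by (auto simp: K_def)
  from sum.group[OF _ fin_A this, of "\<lambda>_. 1::nat"]
  have "(\<Sum>a\<in>A I. card {k \<in> K. z ! k = a}) = card K"
    by (simp add: K_def)
  moreover have "n_act P1 info z I a = card {k \<in> K. z ! k = a}" for a
    unfolding n_act_def K_def by (rule arg_cong[where f = card]) auto
  ultimately show ?thesis
    by (simp add: n_info_def K_def)
qed

lemma one_div_infoset_likelihood_le:
  assumes game: "sp_game T P1 info A" and z: "z \<in> T" and I: "I \<in> info ` P1"
  shows "1 / (\<Prod>a\<in>{a \<in> A I. n_act P1 info z I a > 0}.
              (real (n_act P1 info z I a) / real (n_info P1 info z I)) ^ n_act P1 info z I a)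
    \<le> real (min (n_info P1 info z I) (card (A I))) ^ n_info P1 info z I"
proof -
  have "finite (A I)"
    using I sp_game_finite_actions[OF game] by blast
  from one_div_empirical_likelihood_le_min[OF this sum_n_act_eq_n_info[OF assms, symmetric]]
  show ?thesis .
qed

theorem proposition11:
  fixes T P1 :: "'a list set" and info :: "'a list \<Rightarrow> 'i" and A :: "'i \<Rightarrow> 'a set"
    and z :: "'a list"
  assumes "sp_game T P1 info A"
    and "is_leaf T z"
  shows "1 / alpha P1 info A z \<le>
    (\<Prod>I\<in>{I \<in> info ` P1. n_info P1 info z I > 1}.
       real (min (n_info P1 info z I) (card (A I))) ^ n_info P1 info z I)"
proof -
  have z: "z \<in> T"
    using assms(2) by (simp add: is_leaf_def)
  have "1 / alpha P1 info A z =
    (\<Prod>I\<in>{I \<in> info ` P1. n_info P1 info z I > 1}.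
       1 / (\<Prod>a\<in>{a \<in> A I. n_act P1 info z I a > 0}.
              (real (n_act P1 info z I a) / real (n_info P1 info z I)) ^ n_act P1 info z I a))"
    by (simp add: alpha_def prod_dividef)
  also have "\<dots> \<le> (\<Prod>I\<in>{I \<in> info ` P1. n_info P1 info z I > 1}.
       real (min (n_info P1 info z I) (card (A I))) ^ n_info P1 info z I)"
    using assms(1) z by (intro prod_mono conjI one_div_infoset_likelihood_le) (auto intro!: prod_nonneg)
  finally show ?thesis .
qed

end
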